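(* Let $\Gamma$ be a group acting by isometries on a $\delta$-hyperbolic length space $X$. Assume that $\Gamma$ has no parabolic subgroup and that every elliptic subgroup of $\Gamma$ is finite cyclic. Then $\nu(\Gamma,X)\leq 2$.
   Context: For a subgroup $H\le\Gamma$, its limit set $\Lambda(H)\subset\partial X$ is the set of accumulation points of an $H$-orbit. $H$ is elliptic (resp. parabolic, lineal) if $\Lambda(H)$ is empty (resp. has exactly one point, exactly two points), non-elementary if $\Lambda(H)$ has at least three points, and elementary otherwise. An element is loxodromic if its orbits have exactly two accumulation points in $\partial X$. The $\nu$-invariant $\nu(\Gamma,X)$ is the smallest integer $m$ such that, for all $\gamma_0,\gamma\in\Gamma$ with $\gamma$ loxodromic, if $\gamma_0,\gamma\gamma_0\gamma^{-1},\dots,\gamma^m\gamma_0\gamma^{-m}$ generate an elementary subgroup then so do $\gamma_0$ and $\gamma$. *)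

theory Defs
  imports Complex_Main "HOL-Algebra.Generated_Groups" "HOL-Library.Extended_Nat"
begin

text \<open>The space X is the whole carrier type 'x of class metric_space.\<close>

definition gromov_product :: "'x::metric_space \<Rightarrow> 'x \<Rightarrow> 'x \<Rightarrow> real" where
  "gromov_product w x y = (dist w x + dist w y - dist x y) / 2"

definition length_space :: "'x::metric_space itself \<Rightarrow> bool" where
  "length_space _ \<longleftrightarrow>
     (\<forall>(x::'x) y. \<forall>e>0. \<exists>p :: real \<Rightarrow> 'x.
        continuous_on {0..1} p \<and> p 0 = x \<and> p 1 = y \<and>
        (\<forall>(k::nat) (t::nat \<Rightarrow> real).
           0 \<le> t 0 \<and> t k \<le> 1 \<and> (\<forall>i<k. t i \<le> t (Suc i)) \<longrightarrow>
           (\<Sum>i<k. dist (p (t i)) (p (t (Suc i)))) \<le> dist x y + e))"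

definition delta_hyperbolic :: "'x::metric_space itself \<Rightarrow> real \<Rightarrow> bool" where
  "delta_hyperbolic _ \<delta> \<longleftrightarrow> 0 \<le> \<delta> \<and>
     (\<forall>(w::'x) x y z. min (gromov_product w x y) (gromov_product w y z) - \<delta>
                          \<le> gromov_product w x z)"

definition gromov_seq :: "(nat \<Rightarrow> 'x::metric_space) \<Rightarrow> bool" where
  "gromov_seq s \<longleftrightarrow>
     (\<forall>w K. \<exists>N. \<forall>m\<ge>N. \<forall>n\<ge>N. K \<le> gromov_product w (s m) (s n))"

definition gromov_equiv :: "(nat \<Rightarrow> 'x::metric_space) \<Rightarrow> (nat \<Rightarrow> 'x) \<Rightarrow> bool" where
  "gromov_equiv s t \<longleftrightarrow>
     (\<forall>w K. \<exists>N. \<forall>m\<ge>N. \<forall>n\<ge>N. K \<le> gromov_product w (s m) (t n))"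

text \<open>A boundary point is the equivalence class of a sequence converging at infinity;
  a sequence converges to the boundary point xi iff it belongs to xi.\<close>
definition gromov_boundary :: "(nat \<Rightarrow> 'x::metric_space) set set" where
  "gromov_boundary = {{t. gromov_seq t \<and> gromov_equiv s t} | s. gromov_seq s}"

definition isometric_action :: "('g, 'b) monoid_scheme \<Rightarrow> ('g \<Rightarrow> 'x::metric_space \<Rightarrow> 'x) \<Rightarrow> bool" where
  "isometric_action G act \<longleftrightarrow>
     act \<one>\<^bsub>G\<^esub> = id \<and>
     (\<forall>g\<in>carrier G. \<forall>h\<in>carrier G. act (g \<otimes>\<^bsub>G\<^esub> h) = act g \<circ> act h) \<and>
     (\<forall>g\<in>carrier G. \<forall>x y. dist (act g x) (act g y) = dist x y)"

definition limit_set :: "('g \<Rightarrow> 'x::metric_space \<Rightarrow> 'x) \<Rightarrow> 'g set \<Rightarrow> (nat \<Rightarrow> 'x) set set" where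
  "limit_set act H = {\<xi> \<in> gromov_boundary.
      \<exists>x s. (\<forall>n. s n \<in> (\<lambda>h. act h x) ` H) \<and> s \<in> \<xi>}"

definition elliptic :: "('g \<Rightarrow> 'x::metric_space \<Rightarrow> 'x) \<Rightarrow> 'g set \<Rightarrow> bool" where
  "elliptic act H \<longleftrightarrow> limit_set act H = {}"

definition parabolic :: "('g \<Rightarrow> 'x::metric_space \<Rightarrow> 'x) \<Rightarrow> 'g set \<Rightarrow> bool" where
  "parabolic act H \<longleftrightarrow> (\<exists>\<xi>. limit_set act H = {\<xi>})"

definition lineal :: "('g \<Rightarrow> 'x::metric_space \<Rightarrow> 'x) \<Rightarrow> 'g set \<Rightarrow> bool" where
  "lineal act H \<longleftrightarrow> (\<exists>\<xi> \<eta>. \<xi> \<noteq> \<eta> \<and> limit_set act H = {\<xi>, \<eta>})"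

definition non_elementary :: "('g \<Rightarrow> 'x::metric_space \<Rightarrow> 'x) \<Rightarrow> 'g set \<Rightarrow> bool" where
  "non_elementary act H \<longleftrightarrow> \<not> (finite (limit_set act H) \<and> card (limit_set act H) \<le> 2)"

definition elementary :: "('g \<Rightarrow> 'x::metric_space \<Rightarrow> 'x) \<Rightarrow> 'g set \<Rightarrow> bool" where
  "elementary act H \<longleftrightarrow> \<not> non_elementary act H"

definition loxodromic :: "('g, 'b) monoid_scheme \<Rightarrow> ('g \<Rightarrow> 'x::metric_space \<Rightarrow> 'x) \<Rightarrow> 'g \<Rightarrow> bool" where
  "loxodromic G act g \<longleftrightarrow> lineal act (generate G {g})"

definition nu_property :: "('g, 'b) monoid_scheme \<Rightarrow> ('g \<Rightarrow> 'x::metric_space \<Rightarrow> 'x) \<Rightarrow> nat \<Rightarrow> bool" where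
  "nu_property G act m \<longleftrightarrow>
     (\<forall>g0\<in>carrier G. \<forall>g\<in>carrier G. loxodromic G act g \<longrightarrow>
        elementary act (generate G
           ((\<lambda>i. (g [^]\<^bsub>G\<^esub> i) \<otimes>\<^bsub>G\<^esub> g0 \<otimes>\<^bsub>G\<^esub> inv\<^bsub>G\<^esub> (g [^]\<^bsub>G\<^esub> i)) ` {0..m})) \<longrightarrow>
        elementary act (generate G {g0, g}))"

text \<open>Smallest such m (infinity if none exists).\<close>
definition nu_invariant :: "('g, 'b) monoid_scheme \<Rightarrow> ('g \<Rightarrow> 'x::metric_space \<Rightarrow> 'x) \<Rightarrow> enat" where
  "nu_invariant G act = Inf (enat ` {m. nu_property G act m})"

end

theory Submission
  imports Defs "HOL-Algebra.Multiplicative_Group" "HOL-Algebra.Group_Action"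
begin

text \<open>Let \<open>g\<close> be loxodromic, \<open>g\<^sub>1 = g g\<^sub>0 g\<inverse>\<close>, and suppose
  \<open>H = \<langle>g\<^sub>0, g\<^sub>1, g g\<^sub>1 g\<inverse>\<rangle>\<close> is elementary. The subgroup \<open>H' = \<langle>g\<^sub>0, g\<^sub>1\<rangle>\<close>
  of \<open>H\<close> satisfies \<open>g H' g\<inverse> \<subseteq> H\<close>.

  If \<open>H'\<close> is finite it is elliptic, hence cyclic; \<open>g\<^sub>0\<close> and its conjugate \<open>g\<^sub>1\<close> have the same
  order in this finite cyclic group and so generate the same subgroup. Thus \<open>g\<close> normalises the
  finite group \<open>\<langle>g\<^sub>0\<rangle>\<close>, every element of \<open>\<langle>g\<^sub>0, g\<rangle>\<close> is of the form \<open>g\<^sup>k a\<close> with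
  \<open>a \<in> \<langle>g\<^sub>0\<rangle>\<close>, and the orbits of \<open>\<langle>g\<^sub>0, g\<rangle>\<close> stay at bounded distance from those
  of \<open>\<langle>g\<rangle>\<close>, which has only two limit points.

  If \<open>H'\<close> is infinite it is neither elliptic nor parabolic, so \<open>\<Lambda>(H')\<close> is a pair \<open>{a, b}\<close>,
  which must be all of \<open>\<Lambda>(H)\<close>. Then \<open>g\<^sub>0\<close> and \<open>g\<close> both permute \<open>{a, b}\<close>, hence so does
  all of \<open>\<langle>g\<^sub>0, g\<rangle>\<close>. A group permuting two boundary points has no other limit point:
  seen from any orbit point the Gromov product of \<open>a\<close> and \<open>b\<close> stays bounded, and this bounds the
  distance to any orbit point converging to a third boundary point.\<close>

section \<open>Gromov products\<close>

lemma gromov_product_commute: "gromov_product w x y = gromov_product w y x"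
  unfolding gromov_product_def by (simp add: dist_commute)

lemma gromov_product_self: "gromov_product w x x = dist w x"
  unfolding gromov_product_def by simp

lemma gromov_product_nonneg: "0 \<le> gromov_product w x y"
  unfolding gromov_product_def using dist_triangle[of x y w] by (simp add: dist_commute)

lemma gromov_product_dist_le: "\<bar>gromov_product w x y - gromov_product w x' y\<bar> \<le> dist x x'"
  unfolding gromov_product_def abs_le_iff
  using dist_triangle[of x y x'] dist_triangle[of x' y x] dist_triangle[of w x x'] dist_triangle[of w x' x]
  by (simp add: dist_commute field_simps)

lemma gromov_product_base_dist_le: "\<bar>gromov_product w x y - gromov_product w' x y\<bar> \<le> dist w w'"
  unfolding gromov_product_def abs_le_iff
  using dist_triangle[of w x w'] dist_triangle[of w' x w] dist_triangle[of w y w'] dist_triangle[of w' y w]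
  by (simp add: dist_commute field_simps)

lemma gromov_product_isometry:
  assumes "\<And>x y. dist (f x) (f y) = dist x y"
  shows "gromov_product (f w) (f x) (f y) = gromov_product w x y"
  unfolding gromov_product_def assms ..

lemma dist_lt_of_gromov_products:
  assumes "gromov_product x p a < C1" and "gromov_product x p b < C2" and "gromov_product p a b < C0"
  shows "dist x p < C1 + C2 + C0"
proof -
  have "gromov_product x p a + gromov_product x p b
          = dist x p + gromov_product x a b - gromov_product p a b"
    unfolding gromov_product_def by (simp add: dist_commute field_simps)
  then show ?thesis using assms gromov_product_nonneg[of x a b] by linarith
qed

lemma delta_hyperbolicD:
  "delta_hyperbolic TYPE('x::metric_space) \<delta> \<Longrightarrow>
     min (gromov_product w x y) (gromov_product w y z) - \<delta> \<le> gromov_product w x (z::'x)"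
  unfolding delta_hyperbolic_def by blast

lemma delta_hyperbolic_chain:
  assumes "delta_hyperbolic TYPE('x::metric_space) \<delta>"
  shows "min (min (gromov_product w x y) (gromov_product w y z)) (gromov_product w z u) - 2 * \<delta>
           \<le> gromov_product w x (u::'x)"
  using delta_hyperbolicD[OF assms, of w x y z] delta_hyperbolicD[OF assms, of w x z u] assms
  unfolding delta_hyperbolic_def by linarith

section \<open>Sequences converging at infinity and the Gromov boundary\<close>

lemma gromov_seq_iff_equiv_self: "gromov_seq s \<longleftrightarrow> gromov_equiv s s"
  unfolding gromov_seq_def gromov_equiv_def ..

lemma gromov_equiv_sym: "gromov_equiv s t \<Longrightarrow> gromov_equiv t s"
  unfolding gromov_equiv_def by (metis gromov_product_commute)

lemma gromov_equiv_trans: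
  assumes hyp: "delta_hyperbolic TYPE('x::metric_space) \<delta>"
    and st: "gromov_equiv s (t :: nat \<Rightarrow> 'x)" and tu: "gromov_equiv t u"
  shows "gromov_equiv s u"
  unfolding gromov_equiv_def
proof (intro allI)
  fix w K
  obtain N1 where N1: "\<forall>m\<ge>N1. \<forall>n\<ge>N1. K + \<delta> \<le> gromov_product w (s m) (t n)"
    using st unfolding gromov_equiv_def by blast
  obtain N2 where N2: "\<forall>m\<ge>N2. \<forall>n\<ge>N2. K + \<delta> \<le> gromov_product w (t m) (u n)"
    using tu unfolding gromov_equiv_def by blast
  define N where "N = max N1 N2"
  have "K \<le> gromov_product w (s m) (u n)" if "m \<ge> N" "n \<ge> N" for m n
  proof -
    have "K + \<delta> \<le> gromov_product w (s m) (t N)" "K + \<delta> \<le> gromov_product w (t N) (u n)"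
      using N1 N2 that unfolding N_def by auto
    then show ?thesis using delta_hyperbolicD[OF hyp, of w "s m" "t N" "u n"] by linarith
  qed
  then show "\<exists>N. \<forall>m\<ge>N. \<forall>n\<ge>N. K \<le> gromov_product w (s m) (u n)" by blast
qed

lemma gromov_seq_dist_unbounded: "gromov_seq s \<Longrightarrow> \<exists>N. \<forall>n\<ge>N. K \<le> dist x (s n)"
proof -
  assume "gromov_seq s"
  then obtain N where "\<forall>m\<ge>N. \<forall>n\<ge>N. K \<le> gromov_product x (s m) (s n)"
    unfolding gromov_seq_def by blast
  then have "K \<le> dist x (s n)" if "n \<ge> N" for n
    using that by (metis gromov_product_self)
  then show ?thesis by blast
qed

lemma gromov_equiv_bounded_dist:
  assumes s: "gromov_seq s" and st: "\<And>n. dist (s n) (t n) \<le> M"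
  shows "gromov_equiv s t" and "gromov_seq t"
proof -
  \<comment> \<open>both claims are instances of this, with \<open>s' = s\<close> and \<open>s' = t\<close>\<close>
  have close: "gromov_product w (s m) (s n) - 2 * M \<le> gromov_product w (s' m) (t n)"
    if s': "\<And>n. dist (s n) (s' n) \<le> M" for w m n s'
  proof -
    have "\<bar>gromov_product w (s m) (s n) - gromov_product w (s' m) (s n)\<bar> \<le> M"
      using gromov_product_dist_le[of w "s m" "s n" "s' m"] s'[of m] by linarith
    moreover have "\<bar>gromov_product w (s n) (s' m) - gromov_product w (t n) (s' m)\<bar> \<le> M"
      using gromov_product_dist_le[of w "s n" "s' m" "t n"] st[of n] by linarith
    ultimately show ?thesis
      by (simp add: gromov_product_commute[of w _ "s' m"] abs_le_iff)
  qed
  have "\<exists>N. \<forall>m\<ge>N. \<forall>n\<ge>N. K \<le> gromov_product w (s' m) (t n)"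
    if "\<And>n. dist (s n) (s' n) \<le> M" for w K s'
  proof -
    obtain N where "\<forall>m\<ge>N. \<forall>n\<ge>N. K + 2 * M \<le> gromov_product w (s m) (s n)"
      using s unfolding gromov_seq_def by blast
    then show ?thesis using close[OF that] by (smt (verit))
  qed
  moreover have "dist (s n) (s n) \<le> M" for n
    using st[of n] zero_le_dist[of "s n" "t n"] by (simp del: zero_le_dist)
  ultimately show "gromov_equiv s t" "gromov_seq t"
    unfolding gromov_equiv_def gromov_seq_def using st by blast+
qed

lemma gromov_equiv_isometry_iff:
  assumes iso: "\<And>x y. dist (f x) (f y) = dist x y" and "surj f"
  shows "gromov_equiv (f \<circ> s) (f \<circ> t) \<longleftrightarrow> gromov_equiv s t"
proof -
  have "(\<forall>w. P w) \<longleftrightarrow> (\<forall>w. P (f w))" for P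
  proof (intro iffI allI)
    fix w assume "\<forall>w. P (f w)"
    moreover obtain w' where "w = f w'" using \<open>surj f\<close> by (metis surjD)
    ultimately show "P w" by simp
  qed simp
  then show ?thesis
    unfolding gromov_equiv_def by (simp add: gromov_product_isometry[OF iso])
qed

lemma gromov_seq_isometry_iff:
  "(\<And>x y. dist (f x) (f y) = dist x y) \<Longrightarrow> surj f \<Longrightarrow> gromov_seq (f \<circ> s) \<longleftrightarrow> gromov_seq s"
  by (simp add: gromov_seq_iff_equiv_self gromov_equiv_isometry_iff)

lemma gromov_boundary_memD: "\<xi> \<in> gromov_boundary \<Longrightarrow> s \<in> \<xi> \<Longrightarrow> gromov_seq s"
  unfolding gromov_boundary_def by blast

lemma gromov_boundary_nonempty: "\<xi> \<in> gromov_boundary \<Longrightarrow> \<exists>s. s \<in> \<xi>"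
  unfolding gromov_boundary_def by (auto simp: gromov_seq_iff_equiv_self)

lemma gromov_boundary_eq_class:
  assumes hyp: "delta_hyperbolic TYPE('x::metric_space) \<delta>"
    and "\<xi> \<in> gromov_boundary" and "(s :: nat \<Rightarrow> 'x) \<in> \<xi>"
  shows "\<xi> = {t. gromov_seq t \<and> gromov_equiv s t}"
proof -
  obtain s0 where "\<xi> = {t. gromov_seq t \<and> gromov_equiv s0 t}"
    using assms(2) unfolding gromov_boundary_def by blast
  with assms(3) show ?thesis
    using gromov_equiv_trans[OF hyp] gromov_equiv_sym by blast
qed

lemma gromov_boundary_distinct_not_equiv:
  assumes hyp: "delta_hyperbolic TYPE('x::metric_space) \<delta>"
    and "\<xi> \<in> gromov_boundary" "\<eta> \<in> gromov_boundary" "\<xi> \<noteq> \<eta>"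
    and "(s :: nat \<Rightarrow> 'x) \<in> \<xi>" "t \<in> \<eta>"
  shows "\<not> gromov_equiv s t"
proof
  assume "gromov_equiv s t"
  then have "{u. gromov_seq u \<and> gromov_equiv s u} = {u. gromov_seq u \<and> gromov_equiv t u}"
    using gromov_equiv_trans[OF hyp] gromov_equiv_sym by blast
  then show False
    using gromov_boundary_eq_class[OF hyp assms(2,5)] gromov_boundary_eq_class[OF hyp assms(3,6)]
      assms(4) by simp
qed

lemma not_gromov_equiv_frequently_bounded:
  assumes "\<not> gromov_equiv s t"
  shows "\<exists>L. \<forall>N. \<exists>m\<ge>N. \<exists>n\<ge>N. gromov_product x (s m) (t n) < L"
proof -
  obtain w K where wK: "\<forall>N. \<exists>m\<ge>N. \<exists>n\<ge>N. gromov_product w (s m) (t n) < K"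
    using assms unfolding gromov_equiv_def by (meson not_le)
  have "gromov_product x (s m) (t n) < K + dist x w" if "gromov_product w (s m) (t n) < K" for m n
    using that gromov_product_base_dist_le[of x "s m" "t n" w] by linarith
  with wK show ?thesis by meson
qed

lemma gromov_product_bounded_distinct_points:
  fixes \<xi> \<eta> :: "(nat \<Rightarrow> 'x::metric_space) set"
  assumes hyp: "delta_hyperbolic TYPE('x) \<delta>"
    and \<xi>: "\<xi> \<in> gromov_boundary" and \<eta>: "\<eta> \<in> gromov_boundary" and "\<xi> \<noteq> \<eta>"
  shows "\<exists>C. \<forall>s\<in>\<xi>. \<forall>t\<in>\<eta>. \<exists>N. \<forall>m\<ge>N. \<forall>n\<ge>N. gromov_product x (s m) (t n) < C"
proof -
  obtain s0 t0 where s0: "(s0 :: nat \<Rightarrow> 'x) \<in> \<xi>" and t0: "t0 \<in> \<eta>"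
    using gromov_boundary_nonempty \<xi> \<eta> by blast
  obtain L where L: "\<forall>N. \<exists>m\<ge>N. \<exists>n\<ge>N. gromov_product x (s0 m) (t0 n) < L"
    using not_gromov_equiv_frequently_bounded gromov_boundary_distinct_not_equiv[OF assms s0 t0] by blast
  \<comment> \<open>the four-point chain \<open>s\<^sub>0 \<rightarrow> s \<rightarrow> t \<rightarrow> t\<^sub>0\<close> carries the small products of \<open>s\<^sub>0, t\<^sub>0\<close> over to \<open>s, t\<close>\<close>
  have "\<exists>N. \<forall>m\<ge>N. \<forall>n\<ge>N. gromov_product x (s m) (t n) < L + 2 * \<delta>"
    if s: "s \<in> \<xi>" and t: "t \<in> \<eta>" for s t
  proof -
    have "gromov_equiv s0 s" "gromov_equiv t t0"
      using gromov_boundary_eq_class[OF hyp] \<xi> \<eta> s0 t0 s t gromov_equiv_sym by blast+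
    then obtain N1 N2
      where N1: "\<forall>m\<ge>N1. \<forall>n\<ge>N1. L + 2 * \<delta> \<le> gromov_product x (s0 m) (s n)"
        and N2: "\<forall>m\<ge>N2. \<forall>n\<ge>N2. L + 2 * \<delta> \<le> gromov_product x (t m) (t0 n)"
      unfolding gromov_equiv_def by meson
    have "gromov_product x (s m) (t n) < L + 2 * \<delta>" if "max N1 N2 \<le> m" "max N1 N2 \<le> n" for m n
    proof -
      obtain m0 n0 where "max N1 N2 \<le> m0" "max N1 N2 \<le> n0"
        and small: "gromov_product x (s0 m0) (t0 n0) < L"
        using L by blast
      then have "L + 2 * \<delta> \<le> gromov_product x (s0 m0) (s m)"
        and "L + 2 * \<delta> \<le> gromov_product x (t n) (t0 n0)"
        using N1 N2 that by auto
      then show ?thesis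
        using delta_hyperbolic_chain[OF hyp, of x "s0 m0" "s m" "t n" "t0 n0"] small by linarith
    qed
    then show ?thesis by blast
  qed
  then show ?thesis by blast
qed

section \<open>Isometries acting on the boundary\<close>

definition boundary_map :: "('x::metric_space \<Rightarrow> 'x) \<Rightarrow> (nat \<Rightarrow> 'x) set \<Rightarrow> (nat \<Rightarrow> 'x) set" where
  "boundary_map f \<xi> = (\<lambda>s. f \<circ> s) ` \<xi>"

lemma boundary_map_id: "boundary_map id = id"
  unfolding boundary_map_def by (simp add: fun_eq_iff)

lemma boundary_map_comp: "boundary_map (f \<circ> g) = boundary_map f \<circ> boundary_map g"
  unfolding boundary_map_def by (simp add: fun_eq_iff image_image comp_assoc)

lemma boundary_map_inj: "inj f \<Longrightarrow> inj (boundary_map f)"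
proof -
  assume "inj f"
  then have "inj (\<lambda>s. f \<circ> s)" by (auto intro!: injI simp: fun_eq_iff inj_def)
  then show ?thesis unfolding boundary_map_def by (meson inj_image_eq_iff injI)
qed

lemma isometry_inj: "(\<And>x y. dist (f x) (f y) = dist x y) \<Longrightarrow> inj f"
  by (metis dist_eq_0_iff injI)

lemma boundary_map_gromov_boundary:
  assumes iso: "\<And>x y. dist (f x) (f y) = dist x y" and "surj f" and "\<xi> \<in> gromov_boundary"
  shows "boundary_map f \<xi> \<in> gromov_boundary"
proof -
  obtain s where \<xi>: "\<xi> = {t. gromov_seq t \<and> gromov_equiv s t}" and "gromov_seq s"
    using assms(3) unfolding gromov_boundary_def by blast
  obtain g where "\<And>y. f (g y) = y" using \<open>surj f\<close> by (metis surjD)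
  then have inv_g: "u = f \<circ> (g \<circ> u)" for u :: "nat \<Rightarrow> _" by (simp add: fun_eq_iff)
  have "boundary_map f \<xi> = {u. gromov_seq u \<and> gromov_equiv (f \<circ> s) u}"
  proof (intro equalityI subsetI)
    fix u assume "u \<in> boundary_map f \<xi>"
    then obtain t where "t \<in> \<xi>" "u = f \<circ> t" unfolding boundary_map_def by blast
    then show "u \<in> {u. gromov_seq u \<and> gromov_equiv (f \<circ> s) u}"
      using \<xi> gromov_equiv_isometry_iff[OF assms(1,2)] gromov_seq_isometry_iff[OF assms(1,2)] by simp
  next
    fix u assume "u \<in> {u. gromov_seq u \<and> gromov_equiv (f \<circ> s) u}"
    then have "g \<circ> u \<in> \<xi>"
      using \<xi> gromov_equiv_isometry_iff[OF assms(1,2)] gromov_seq_isometry_iff[OF assms(1,2)] inv_g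
      by (metis (no_types, lifting) mem_Collect_eq)
    then show "u \<in> boundary_map f \<xi>" unfolding boundary_map_def using inv_g by blast
  qed
  moreover have "gromov_seq (f \<circ> s)"
    using \<open>gromov_seq s\<close> gromov_seq_isometry_iff[OF assms(1,2)] by blast
  ultimately show ?thesis unfolding gromov_boundary_def by blast
qed

lemma gromov_product_bounded_preserved_pair:
  assumes hyp: "delta_hyperbolic TYPE('x::metric_space) \<delta>"
    and a: "a \<in> gromov_boundary" and b: "b \<in> gromov_boundary" and "a \<noteq> b"
  shows "\<exists>C. \<forall>f. (\<forall>x y. dist (f x) (f y) = dist x y) \<longrightarrow> boundary_map f ` {a, b} = {a, b} \<longrightarrow>
           (\<forall>\<alpha>\<in>a. \<forall>\<beta>\<in>b. \<exists>N. \<forall>n\<ge>N. gromov_product (x::'x) (f (\<alpha> n)) (f (\<beta> n)) < C)"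
proof -
  obtain C where C: "\<forall>s\<in>a. \<forall>t\<in>b. \<exists>N. \<forall>m\<ge>N. \<forall>n\<ge>N. gromov_product x (s m) (t n) < C"
    using gromov_product_bounded_distinct_points[OF assms] by blast
  show ?thesis
  proof (intro exI[of _ C] allI impI ballI)
    fix f and \<alpha> \<beta> :: "nat \<Rightarrow> 'x"
    assume iso: "\<forall>x y. dist (f x) (f y) = dist x y" and f: "boundary_map f ` {a, b} = {a, b}"
      and \<alpha>: "\<alpha> \<in> a" and \<beta>: "\<beta> \<in> b"
    have "inj f" by (rule isometry_inj) (use iso in blast)
    then have "boundary_map f a \<noteq> boundary_map f b"
      using boundary_map_inj \<open>a \<noteq> b\<close> by (meson injD)
    moreover have "f \<circ> \<alpha> \<in> boundary_map f a" "f \<circ> \<beta> \<in> boundary_map f b"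
      using \<alpha> \<beta> unfolding boundary_map_def by blast+
    moreover have "boundary_map f a \<in> {a, b}" "boundary_map f b \<in> {a, b}"
      using f by blast+
    ultimately consider "f \<circ> \<alpha> \<in> a" "f \<circ> \<beta> \<in> b" | "f \<circ> \<beta> \<in> a" "f \<circ> \<alpha> \<in> b"
      by blast
    then show "\<exists>N. \<forall>n\<ge>N. gromov_product x (f (\<alpha> n)) (f (\<beta> n)) < C"
    proof cases
      case 1
      then obtain N where "\<forall>m\<ge>N. \<forall>n\<ge>N. gromov_product x ((f \<circ> \<alpha>) m) ((f \<circ> \<beta>) n) < C"
        using C by blast
      then show ?thesis by auto
    next
      case 2
      then obtain N where "\<forall>m\<ge>N. \<forall>n\<ge>N. gromov_product x ((f \<circ> \<beta>) m) ((f \<circ> \<alpha>) n) < C"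
        using C by blast
      then show ?thesis by (auto simp: gromov_product_commute[of x "f (\<alpha> _)"])
    qed
  qed
qed

section \<open>Conjugation, cyclic subgroups and normalisers\<close>

context group
begin

lemma conj_group_hom: "g \<in> carrier G \<Longrightarrow> group_hom G G (\<lambda>x. g \<otimes> x \<otimes> inv g)"
  by (intro group_hom.intro group_hom_axioms.intro is_group homI) (simp_all add: m_assoc inv_solve_left)

lemma conj_generate:
  assumes "g \<in> carrier G" and "S \<subseteq> carrier G"
  shows "(\<lambda>x. g \<otimes> x \<otimes> inv g) ` generate G S = generate G ((\<lambda>x. g \<otimes> x \<otimes> inv g) ` S)"
  using group_hom.generate_img[OF conj_group_hom[OF assms(1)] assms(2)] by simp

lemma ord_conj:
  assumes g: "g \<in> carrier G" and x: "x \<in> carrier G"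
  shows "ord (g \<otimes> x \<otimes> inv g) = ord x"
proof -
  have "inj_on (\<lambda>x. g \<otimes> x \<otimes> inv g) (generate G {x})"
    using generate_incl[of "{x}"] x g by (intro inj_onI) (auto intro: conjugation_is_inj)
  then have "card ((\<lambda>x. g \<otimes> x \<otimes> inv g) ` generate G {x}) = card (generate G {x})"
    by (rule card_image)
  moreover have "(\<lambda>x. g \<otimes> x \<otimes> inv g) ` generate G {x} = generate G {g \<otimes> x \<otimes> inv g}"
    using conj_generate[OF g, of "{x}"] x by simp
  ultimately have "card (generate G {g \<otimes> x \<otimes> inv g}) = card (generate G {x})" by simp
  then show ?thesis using g x by (simp add: generate_pow_card)
qed

lemma cyclic_subgroup_eq_generate_pow:
  assumes h: "h \<in> carrier G" and fin: "finite (generate G {h})" and a: "a \<in> generate G {h}"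
  shows "generate G {a} = generate G {h [^] (ord h div ord a)}"
proof -
  \<comment> \<open>with \<open>n = d e\<close>, \<open>\<langle>a\<rangle>\<close> lies in \<open>\<langle>h\<^sup>e\<rangle>\<close>, and both have order \<open>d = ord a\<close>\<close>
  define n where "n = ord h"
  have "\<one> \<in> generate G {h}" by (rule generate.one)
  then have n_pos: "n > 0"
    unfolding n_def generate_pow_card[OF h] using fin card_gt_0_iff by blast
  obtain i :: nat where ai: "a = h [^] i"
    using a generate_pow_nat[OF h] n_pos unfolding n_def by auto
  have a_carrier: "a \<in> carrier G" using ai h by simp
  define d where "d = ord a"
  have "a [^] n = (h [^] n) [^] i" unfolding ai using h by (simp add: nat_pow_pow mult.commute)
  then have "a [^] n = \<one>" using h unfolding n_def by simp
  then have "d dvd n" unfolding d_def using pow_eq_id[OF a_carrier] by simp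
  then obtain e where n_de: "n = d * e" by blast
  have e_pos: "e > 0" using n_pos n_de by simp
  have "h [^] (i * d) = a [^] d" unfolding ai using h by (simp add: nat_pow_pow)
  then have "h [^] (i * d) = \<one>" unfolding d_def using a_carrier by simp
  then have "d * e dvd d * i" using pow_eq_id[OF h] n_de unfolding n_def by (simp add: mult.commute)
  then have "e dvd i" using n_de n_pos by simp
  then obtain t where "i = e * t" by blast
  then have "a = (h [^] e) [^] int t" using ai h by (simp add: nat_pow_pow int_pow_int)
  then have "a \<in> generate G {h [^] e}" using generate_pow[of "h [^] e"] h by blast
  then have sub: "generate G {a} \<subseteq> generate G {h [^] e}"
    using generate_subgroup_incl[OF _ generate_is_subgroup] h by simp
  have "h [^] e \<in> generate G {h}"
    using generate_pow_nat[OF h] n_pos unfolding n_def by auto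
  then have "generate G {h [^] e} \<subseteq> generate G {h}"
    using h by (intro generate_subgroup_incl generate_is_subgroup) auto
  then have fin_e: "finite (generate G {h [^] e})" using fin by (rule finite_subset)
  have "d \<noteq> 0" using n_de n_pos by simp
  then have "ord (h [^] e) = d"
    using ord_pow[OF h, of e] n_de e_pos unfolding n_def by simp
  then have "card (generate G {h [^] e}) = card (generate G {a})"
    using h a_carrier by (simp add: generate_pow_card d_def)
  then have "generate G {a} = generate G {h [^] e}"
    using card_seteq[OF fin_e sub] by simp
  then show ?thesis using n_de \<open>d \<noteq> 0\<close> unfolding n_def d_def by simp
qed

lemma normalizer_conj_mem:
  assumes "A \<subseteq> carrier G" and "b \<in> normalizer G A" and "a \<in> A"
  shows "b \<otimes> a \<otimes> inv b \<in> A"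
proof -
  have "b <# A #> inv b = A" using assms(1,2) unfolding normalizer_def stabilizer_def by simp
  moreover have "b \<otimes> a \<otimes> inv b \<in> b <# A #> inv b"
    using assms(3) unfolding l_coset_def r_coset_def by blast
  ultimately show ?thesis by simp
qed

lemma normalizer_if_conj_generate_eq:
  assumes g: "g \<in> carrier G" and a: "a \<in> carrier G"
    and eq: "generate G {g \<otimes> a \<otimes> inv g} = generate G {a}"
  shows "g \<in> normalizer G (generate G {a})"
proof -
  have "g <# generate G {a} #> inv g = (\<lambda>x. g \<otimes> x \<otimes> inv g) ` generate G {a}"
    unfolding l_coset_def r_coset_def by blast
  also have "\<dots> = generate G {a}" using conj_generate[OF g, of "{a}"] a eq by simp
  finally have "g <# generate G {a} #> inv g = generate G {a}" .
  then show ?thesis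
    using g a generate_incl[of "{a}"] unfolding normalizer_def stabilizer_def by simp
qed

lemma subgroup_set_mult_normalizer:
  assumes A: "subgroup A G" and B: "subgroup B G" and BN: "B \<subseteq> normalizer G A"
  shows "subgroup (B <#> A) G"
proof -
  have AG: "A \<subseteq> carrier G" and BG: "B \<subseteq> carrier G"
    using A B by (auto dest: subgroup.subset)
  have conj: "b \<otimes> a \<otimes> inv b \<in> A" if "b \<in> B" "a \<in> A" for a b
    using normalizer_conj_mem[OF AG] BN that by blast
  have mem: "b \<otimes> a \<in> B <#> A" if "b \<in> B" "a \<in> A" for a b
    unfolding set_mult_def using that by blast
  have memE: "\<exists>b\<in>B. \<exists>a\<in>A. x = b \<otimes> a" if "x \<in> B <#> A" for x
    using that unfolding set_mult_def by blast
  show ?thesis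
  proof (rule subgroupI)
    show "B <#> A \<subseteq> carrier G" using AG BG by (intro setmult_subset_G)
    show "B <#> A \<noteq> {}" using mem[OF subgroup.one_closed[OF B] subgroup.one_closed[OF A]] by blast
  next
    fix x assume "x \<in> B <#> A"
    then obtain b a where b: "b \<in> B" and a: "a \<in> A" and x: "x = b \<otimes> a" using memE by blast
    have "inv x = inv b \<otimes> (b \<otimes> inv a \<otimes> inv b)"
      using b a BG AG unfolding x by (simp add: inv_mult_group m_assoc[symmetric] subsetD)
    then show "inv x \<in> B <#> A"
      using mem subgroup.m_inv_closed[OF B b] conj[OF b subgroup.m_inv_closed[OF A a]] by simp
  next
    fix x y assume "x \<in> B <#> A" "y \<in> B <#> A"
    then obtain b1 a1 b2 a2 where b1: "b1 \<in> B" and a1: "a1 \<in> A" and x: "x = b1 \<otimes> a1"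
      and b2: "b2 \<in> B" and a2: "a2 \<in> A" and y: "y = b2 \<otimes> a2"
      using memE by meson
    have "x \<otimes> y = (b1 \<otimes> b2) \<otimes> (inv b2 \<otimes> a1 \<otimes> b2 \<otimes> a2)"
      using b1 a1 b2 a2 BG AG unfolding x y
      by (simp add: m_assoc[symmetric] subsetD, simp add: m_assoc subsetD)
    moreover have "inv b2 \<otimes> a1 \<otimes> b2 \<otimes> a2 \<in> A"
      using conj[OF subgroup.m_inv_closed[OF B b2] a1] subgroup.m_closed[OF A _ a2] b2 BG
      by (simp add: subsetD)
    ultimately show "x \<otimes> y \<in> B <#> A"
      using mem subgroup.m_closed[OF B b1 b2] by simp
  qed
qed

lemma generate_pair_subset_set_mult:
  assumes g: "g \<in> carrier G" and g0: "g0 \<in> carrier G"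
    and normalizes: "g \<in> normalizer G (generate G {g0})"
  shows "generate G {g0, g} \<subseteq> generate G {g} <#> generate G {g0}"
proof -
  have "subgroup (normalizer G (generate G {g0})) G"
    using g0 generate_incl[of "{g0}"] by (intro normalizer_imp_subgroup) auto
  then have "generate G {g} \<subseteq> normalizer G (generate G {g0})"
    using normalizes by (intro generate_subgroup_incl) auto
  then have sub: "subgroup (generate G {g} <#> generate G {g0}) G"
    using g g0 by (intro subgroup_set_mult_normalizer generate_is_subgroup) auto
  have "g \<otimes> \<one> \<in> generate G {g} <#> generate G {g0}" "\<one> \<otimes> g0 \<in> generate G {g} <#> generate G {g0}"
    unfolding set_mult_def by (blast intro: generate.incl generate.one)+
  then have "{g0, g} \<subseteq> generate G {g} <#> generate G {g0}" using g g0 by simp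
  then show ?thesis using sub by (rule generate_subgroup_incl)
qed

end

section \<open>Limit sets\<close>

lemma limit_set_mono: "H \<subseteq> H' \<Longrightarrow> limit_set act H \<subseteq> limit_set act H'"
  unfolding limit_set_def by blast

lemma finite_imp_elliptic:
  assumes "finite H"
  shows "elliptic act H"
  unfolding elliptic_def
proof (rule ccontr)
  assume "limit_set act H \<noteq> {}"
  then obtain \<xi> x s where orbit: "\<forall>n. s n \<in> (\<lambda>h. act h x) ` H"
    and s: "s \<in> \<xi>" and \<xi>: "\<xi> \<in> gromov_boundary"
    unfolding limit_set_def by blast
  from \<xi> s have "gromov_seq s" by (rule gromov_boundary_memD)
  define M where "M = Max ((\<lambda>h. dist x (act h x)) ` H)"
  have "dist x (s n) \<le> M" for n
  proof -
    obtain h where "h \<in> H" "s n = act h x" using orbit by blast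
    then show ?thesis unfolding M_def using assms by (simp add: Max_ge)
  qed
  moreover obtain N where "\<forall>n\<ge>N. M + 1 \<le> dist x (s n)"
    using gromov_seq_dist_unbounded[OF \<open>gromov_seq s\<close>] by blast
  ultimately have "M + 1 \<le> M" by (meson order.refl order.trans)
  then show False by simp
qed

lemma elementary_if_limit_set_subset:
  "limit_set act K \<subseteq> L \<Longrightarrow> finite L \<Longrightarrow> card L \<le> 2 \<Longrightarrow> elementary act K"
  unfolding elementary_def non_elementary_def by (meson card_mono finite_subset order_trans)

lemma lineal_imp_elementary: "lineal act H \<Longrightarrow> elementary act H"
  unfolding lineal_def by (auto intro: elementary_if_limit_set_subset simp: card_insert_if)

lemma limit_set_eq_pair_of_subset_elementary:
  assumes "H' \<subseteq> H" and "elementary act H" and "\<not> elliptic act H'" and "\<not> parabolic act H'"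
  shows "\<exists>a b. a \<noteq> b \<and> limit_set act H' = {a, b} \<and> limit_set act H = {a, b}"
proof -
  have sub: "limit_set act H' \<subseteq> limit_set act H" using assms(1) by (rule limit_set_mono)
  have fin: "finite (limit_set act H)" and le2: "card (limit_set act H) \<le> 2"
    using assms(2) unfolding elementary_def non_elementary_def by auto
  have fin': "finite (limit_set act H')" using finite_subset[OF sub fin] .
  have "limit_set act H' \<noteq> {}" using assms(3) unfolding elliptic_def .
  then have "card (limit_set act H') \<noteq> 0" using fin' by simp
  moreover have "card (limit_set act H') \<noteq> 1"
  proof
    assume "card (limit_set act H') = 1"
    then obtain z where "limit_set act H' = {z}" by (rule card_1_singletonE)
    with assms(4) show False unfolding parabolic_def by blast
  qed
  moreover have "card (limit_set act H') \<le> card (limit_set act H)" using card_mono[OF fin sub] .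
  ultimately have card2: "card (limit_set act H') = 2" using le2 by linarith
  then have same: "limit_set act H = limit_set act H'"
    by (intro card_seteq[OF fin sub, symmetric]) (use le2 in linarith)
  obtain a b where ab: "limit_set act H' = {a, b}" "a \<noteq> b"
    using card2 unfolding card_2_iff by blast
  then show ?thesis using same by (intro exI[of _ a] exI[of _ b]) simp
qed

section \<open>Groups acting by isometries\<close>

locale isometric_group_action = group G for G :: "('g, 'b) monoid_scheme" (structure) +
  fixes act :: "'g \<Rightarrow> 'x::metric_space \<Rightarrow> 'x"
  assumes isometric: "isometric_action G act"
begin

lemma act_mult: "g \<in> carrier G \<Longrightarrow> h \<in> carrier G \<Longrightarrow> act (g \<otimes> h) = act g \<circ> act h"
  using isometric unfolding isometric_action_def by blast

lemma act_one: "act \<one> = id"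
  using isometric unfolding isometric_action_def by blast

lemma act_dist: "g \<in> carrier G \<Longrightarrow> dist (act g x) (act g y) = dist x y"
  using isometric unfolding isometric_action_def by blast

lemma act_inv_act: "g \<in> carrier G \<Longrightarrow> act (inv g) (act g x) = x"
  using act_mult[of "inv g" g] act_one by (simp add: fun_eq_iff)

lemma act_act_inv: "g \<in> carrier G \<Longrightarrow> act g (act (inv g) x) = x"
  using act_mult[of g "inv g"] act_one by (simp add: fun_eq_iff)

lemma surj_act: "g \<in> carrier G \<Longrightarrow> surj (act g)"
  by (metis act_act_inv surjI)

lemma act_conj: "g \<in> carrier G \<Longrightarrow> h \<in> carrier G \<Longrightarrow> act g (act h x) = act (g \<otimes> h \<otimes> inv g) (act g x)"
  by (simp add: act_mult act_inv_act)

lemma boundary_map_act_gromov_boundary: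
  "g \<in> carrier G \<Longrightarrow> \<xi> \<in> gromov_boundary \<Longrightarrow> boundary_map (act g) \<xi> \<in> gromov_boundary"
  using boundary_map_gromov_boundary act_dist surj_act by blast

lemma boundary_map_act_mult:
  "g \<in> carrier G \<Longrightarrow> h \<in> carrier G \<Longrightarrow> boundary_map (act (g \<otimes> h)) = boundary_map (act g) \<circ> boundary_map (act h)"
  by (simp add: act_mult boundary_map_comp)

lemma subgroup_boundary_stabilizer: "subgroup {k \<in> carrier G. boundary_map (act k) ` L = L} G"
proof (rule subgroupI)
  show "{k \<in> carrier G. boundary_map (act k) ` L = L} \<noteq> {}"
    using act_one by (auto simp: boundary_map_id)
next
  fix k assume "k \<in> {k \<in> carrier G. boundary_map (act k) ` L = L}"
  then have k: "k \<in> carrier G" and kL: "boundary_map (act k) ` L = L" by auto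
  have "boundary_map (act (inv k)) ` L = boundary_map (act (inv k)) ` boundary_map (act k) ` L"
    using kL by simp
  also have "\<dots> = boundary_map (act \<one>) ` L"
    using k by (simp add: image_comp flip: boundary_map_act_mult)
  also have "\<dots> = L" using act_one by (simp add: boundary_map_id)
  finally show "inv k \<in> {k \<in> carrier G. boundary_map (act k) ` L = L}" using k by simp
next
  fix g h assume "g \<in> {k \<in> carrier G. boundary_map (act k) ` L = L}"
    and "h \<in> {k \<in> carrier G. boundary_map (act k) ` L = L}"
  then have g: "g \<in> carrier G" "boundary_map (act g) ` L = L"
    and h: "h \<in> carrier G" "boundary_map (act h) ` L = L" by auto
  have "boundary_map (act (g \<otimes> h)) ` L = boundary_map (act g) ` boundary_map (act h) ` L"
    by (simp only: boundary_map_act_mult[OF g(1) h(1)] image_comp)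
  then show "g \<otimes> h \<in> {k \<in> carrier G. boundary_map (act k) ` L = L}" using g h by simp
qed auto

lemma boundary_map_limit_set_conj:
  assumes k: "k \<in> carrier G" and H': "H' \<subseteq> carrier G"
    and conj: "\<forall>h\<in>H'. k \<otimes> h \<otimes> inv k \<in> H" and \<xi>: "\<xi> \<in> limit_set act H'"
  shows "boundary_map (act k) \<xi> \<in> limit_set act H"
proof -
  obtain x s where orbit: "\<forall>n. s n \<in> (\<lambda>h. act h x) ` H'" and "s \<in> \<xi>" "\<xi> \<in> gromov_boundary"
    using \<xi> unfolding limit_set_def by blast
  then have "act k \<circ> s \<in> boundary_map (act k) \<xi>" unfolding boundary_map_def by blast
  moreover have "(act k \<circ> s) n \<in> (\<lambda>h. act h (act k x)) ` H" for n
  proof -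
    obtain h where "h \<in> H'" "s n = act h x" using orbit by blast
    then show ?thesis using conj H' k act_conj[of k h x] by auto
  qed
  ultimately show ?thesis
    using boundary_map_act_gromov_boundary[OF k \<open>\<xi> \<in> gromov_boundary\<close>]
    unfolding limit_set_def by blast
qed

end

locale hyperbolic_group_action = isometric_group_action G act
  for G :: "('g, 'b) monoid_scheme" (structure) and act :: "'g \<Rightarrow> 'x::metric_space \<Rightarrow> 'x" +
  fixes \<delta> :: real
  assumes hyperbolic: "delta_hyperbolic TYPE('x::metric_space) \<delta>"
begin

lemma limit_set_set_mult_finite:
  assumes C: "C \<subseteq> carrier G" and F: "F \<subseteq> carrier G" and "finite F"
  shows "limit_set act (C <#> F) \<subseteq> limit_set act C"
proof
  fix \<zeta> assume "\<zeta> \<in> limit_set act (C <#> F)"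
  then obtain x s where orbit: "\<forall>n. s n \<in> (\<lambda>h. act h x) ` (C <#> F)"
    and s: "s \<in> \<zeta>" and \<zeta>: "\<zeta> \<in> gromov_boundary"
    unfolding limit_set_def by blast
  have "\<exists>c f. c \<in> C \<and> f \<in> F \<and> s n = act c (act f x)" for n
  proof -
    obtain c f where cf: "c \<in> C" "f \<in> F" and sn: "s n = act (c \<otimes> f) x"
      using orbit unfolding set_mult_def by blast
    have "c \<in> carrier G" "f \<in> carrier G" using cf C F by auto
    then have "s n = act c (act f x)" using sn by (simp add: act_mult)
    with cf show ?thesis by blast
  qed
  then obtain c f where c: "\<And>n. c n \<in> C" and f: "\<And>n. f n \<in> F"
    and s_cf: "\<And>n. s n = act (c n) (act (f n) x)"
    by metis
  define t where "t n = act (c n) x" for n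
  define M where "M = Max ((\<lambda>f. dist (act f x) x) ` F)"
  have "dist (s n) (t n) = dist (act (f n) x) x" for n
    unfolding s_cf t_def using act_dist c C by blast
  then have "dist (s n) (t n) \<le> M" for n
    unfolding M_def using f \<open>finite F\<close> by (auto intro!: Max_ge)
  then have "gromov_equiv s t" "gromov_seq t"
    using gromov_equiv_bounded_dist gromov_boundary_memD[OF \<zeta> s] by blast+
  then have "t \<in> \<zeta>" using gromov_boundary_eq_class[OF hyperbolic \<zeta> s] by blast
  moreover have "t n \<in> (\<lambda>h. act h x) ` C" for n unfolding t_def using c by blast
  ultimately show "\<zeta> \<in> limit_set act C" unfolding limit_set_def using \<zeta> by blast
qed

lemma gromov_product_bounded_from_preserving_orbit:
  assumes a: "a \<in> gromov_boundary" and b: "b \<in> gromov_boundary" and "a \<noteq> b"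
  shows "\<exists>C. \<forall>k\<in>carrier G. boundary_map (act k) ` {a, b} = {a, b} \<longrightarrow>
           (\<forall>\<alpha>\<in>a. \<forall>\<beta>\<in>b. \<exists>N. \<forall>n\<ge>N. gromov_product (act k x) (\<alpha> n) (\<beta> n) < C)"
proof -
  obtain C where C: "\<forall>f. (\<forall>x y. dist (f x) (f y) = dist x y) \<longrightarrow>
      boundary_map f ` {a, b} = {a, b} \<longrightarrow>
      (\<forall>\<alpha>\<in>a. \<forall>\<beta>\<in>b. \<exists>N. \<forall>n\<ge>N. gromov_product x (f (\<alpha> n)) (f (\<beta> n)) < C)"
    using gromov_product_bounded_preserved_pair[OF hyperbolic a b \<open>a \<noteq> b\<close>, where x = x] by (elim exE)
  show ?thesis
  proof (intro exI[of _ C] ballI impI)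
    fix k \<alpha> \<beta> assume k: "k \<in> carrier G" and "boundary_map (act k) ` {a, b} = {a, b}"
      and \<alpha>: "\<alpha> \<in> a" and \<beta>: "\<beta> \<in> b"
    then have "k \<in> {k \<in> carrier G. boundary_map (act k) ` {a, b} = {a, b}}" by blast
    then have "inv k \<in> {k \<in> carrier G. boundary_map (act k) ` {a, b} = {a, b}}"
      by (rule subgroup.m_inv_closed[OF subgroup_boundary_stabilizer])
    then have inv_preserves: "boundary_map (act (inv k)) ` {a, b} = {a, b}" by simp
    have iso_inv: "dist (act (inv k) y) (act (inv k) z) = dist y z" for y z
      using k by (simp add: act_dist)
    have seen_from_x: "gromov_product (act k x) (\<alpha> n) (\<beta> n)
        = gromov_product x (act (inv k) (\<alpha> n)) (act (inv k) (\<beta> n))" for n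
      using gromov_product_isometry[OF iso_inv, of "act k x" "\<alpha> n" "\<beta> n"] act_inv_act[OF k] by simp
    show "\<exists>N. \<forall>n\<ge>N. gromov_product (act k x) (\<alpha> n) (\<beta> n) < C"
      unfolding seen_from_x by (rule C[rule_format, OF iso_inv inv_preserves \<alpha> \<beta>])
  qed
qed

lemma limit_set_subset_preserved_pair:
  assumes a: "a \<in> gromov_boundary" and b: "b \<in> gromov_boundary" and "a \<noteq> b"
    and K: "K \<subseteq> carrier G" and preserves: "\<forall>k\<in>K. boundary_map (act k) ` {a, b} = {a, b}"
  shows "limit_set act K \<subseteq> {a, b}"
proof
  fix \<zeta> assume "\<zeta> \<in> limit_set act K"
  then obtain x s where orbit: "\<forall>n. s n \<in> (\<lambda>h. act h x) ` K"
    and s: "s \<in> \<zeta>" and \<zeta>: "\<zeta> \<in> gromov_boundary"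
    unfolding limit_set_def by blast
  show "\<zeta> \<in> {a, b}"
  proof (rule ccontr)
    assume "\<zeta> \<notin> {a, b}"
    then have "\<zeta> \<noteq> a" "\<zeta> \<noteq> b" by auto
    obtain \<alpha> \<beta> where \<alpha>: "\<alpha> \<in> a" and \<beta>: "\<beta> \<in> b" using gromov_boundary_nonempty a b by blast
    obtain C1 where "\<forall>s\<in>\<zeta>. \<forall>t\<in>a. \<exists>N. \<forall>m\<ge>N. \<forall>n\<ge>N. gromov_product x (s m) (t n) < C1"
      using gromov_product_bounded_distinct_points[OF hyperbolic \<zeta> a \<open>\<zeta> \<noteq> a\<close>] by blast
    then obtain N1 where N1: "\<forall>m\<ge>N1. \<forall>n\<ge>N1. gromov_product x (s m) (\<alpha> n) < C1"
      using s \<alpha> by blast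
    obtain C2 where "\<forall>s\<in>\<zeta>. \<forall>t\<in>b. \<exists>N. \<forall>m\<ge>N. \<forall>n\<ge>N. gromov_product x (s m) (t n) < C2"
      using gromov_product_bounded_distinct_points[OF hyperbolic \<zeta> b \<open>\<zeta> \<noteq> b\<close>] by blast
    then obtain N2 where N2: "\<forall>m\<ge>N2. \<forall>n\<ge>N2. gromov_product x (s m) (\<beta> n) < C2"
      using s \<beta> by blast
    obtain C0 where C0: "\<forall>k\<in>carrier G. boundary_map (act k) ` {a, b} = {a, b} \<longrightarrow>
        (\<forall>\<alpha>\<in>a. \<forall>\<beta>\<in>b. \<exists>N. \<forall>n\<ge>N. gromov_product (act k x) (\<alpha> n) (\<beta> n) < C0)"
      using gromov_product_bounded_from_preserving_orbit[OF a b \<open>a \<noteq> b\<close>, where x = x] by (elim exE)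
    obtain N4 where N4: "\<forall>n\<ge>N4. C1 + C2 + C0 \<le> dist x (s n)"
      using gromov_seq_dist_unbounded gromov_boundary_memD[OF \<zeta> s] by blast
    define n where "n = max (max N1 N2) N4"
    obtain k where k: "k \<in> K" and sn: "s n = act k x" using orbit by blast
    have kG: "k \<in> carrier G" and k_preserves: "boundary_map (act k) ` {a, b} = {a, b}"
      using k K preserves by auto
    obtain N3 where N3: "\<forall>m\<ge>N3. gromov_product (s n) (\<alpha> m) (\<beta> m) < C0"
      using C0[rule_format, OF kG k_preserves \<alpha> \<beta>] unfolding sn by (elim exE)
    define m where "m = max (max N1 N2) N3"
    have "gromov_product x (s n) (\<alpha> m) < C1" "gromov_product x (s n) (\<beta> m) < C2"
      "gromov_product (s n) (\<alpha> m) (\<beta> m) < C0"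
      using N1 N2 N3 unfolding m_def n_def by simp_all
    then have "dist x (s n) < C1 + C2 + C0" by (rule dist_lt_of_gromov_products)
    moreover have "C1 + C2 + C0 \<le> dist x (s n)" using N4 unfolding n_def by simp
    ultimately show False by simp
  qed
qed

lemma elementary_generate_preserving_pair:
  assumes a: "a \<in> gromov_boundary" and b: "b \<in> gromov_boundary" and "a \<noteq> b"
    and S: "S \<subseteq> carrier G" and into: "\<forall>s\<in>S. boundary_map (act s) ` {a, b} \<subseteq> {a, b}"
  shows "elementary act (generate G S)"
proof -
  have "boundary_map (act s) ` {a, b} = {a, b}" if "s \<in> S" for s
  proof (rule endo_inj_surj)
    have "inj (act s)" by (rule isometry_inj) (use act_dist that S in blast)
    then show "inj_on (boundary_map (act s)) {a, b}"
      by (rule inj_on_subset[OF boundary_map_inj]) simp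
  qed (use into that in auto)
  then have stab: "generate G S \<subseteq> {k \<in> carrier G. boundary_map (act k) ` {a, b} = {a, b}}"
    using S by (intro generate_subgroup_incl[OF _ subgroup_boundary_stabilizer]) auto
  have "limit_set act (generate G S) \<subseteq> {a, b}"
    by (rule limit_set_subset_preserved_pair[OF a b \<open>a \<noteq> b\<close>]) (use stab in auto)
  then show ?thesis by (rule elementary_if_limit_set_subset) (auto simp: card_insert_if)
qed

lemma elementary_generate_normalizing:
  assumes g: "g \<in> carrier G" and g0: "g0 \<in> carrier G" and "elementary act (generate G {g})"
    and "finite (generate G {g0})" and "g \<in> normalizer G (generate G {g0})"
  shows "elementary act (generate G {g0, g})"
proof -
  have "limit_set act (generate G {g0, g}) \<subseteq> limit_set act (generate G {g} <#> generate G {g0})"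
    using generate_pair_subset_set_mult[OF g g0 assms(5)] by (rule limit_set_mono)
  also have "\<dots> \<subseteq> limit_set act (generate G {g})"
    using g g0 assms(4) generate_incl by (intro limit_set_set_mult_finite) auto
  finally have "limit_set act (generate G {g0, g}) \<subseteq> limit_set act (generate G {g})" .
  moreover have "finite (limit_set act (generate G {g}))" "card (limit_set act (generate G {g})) \<le> 2"
    using assms(3) unfolding elementary_def non_elementary_def by auto
  ultimately show ?thesis by (rule elementary_if_limit_set_subset)
qed

lemma elementary_pair_if_finite_conj_pair:
  assumes elliptic_cyclic: "\<forall>H. subgroup H G \<and> elliptic act H \<longrightarrow> finite H \<and> (\<exists>h\<in>H. H = generate G {h})"
    and g0: "g0 \<in> carrier G" and g: "g \<in> carrier G" and lox: "loxodromic G act g"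
    and fin_pair: "finite (generate G {g0, g \<otimes> g0 \<otimes> inv g})"
  shows "elementary act (generate G {g0, g})"
proof -
  define H' where "H' = generate G {g0, g \<otimes> g0 \<otimes> inv g}"
  have H': "subgroup H' G" unfolding H'_def using g g0 by (intro generate_is_subgroup) simp
  have gens: "g0 \<in> H'" "g \<otimes> g0 \<otimes> inv g \<in> H'" unfolding H'_def by (auto intro: generate.incl)
  have "elliptic act H'" using fin_pair unfolding H'_def by (rule finite_imp_elliptic)
  then obtain h where "h \<in> H'" and H'_cyclic: "H' = generate G {h}"
    using elliptic_cyclic H' by blast
  then have h: "h \<in> carrier G" using subgroup.subset[OF H'] by blast
  have fin: "finite (generate G {h})" using fin_pair unfolding H'_def[symmetric] H'_cyclic .
  have "generate G {g \<otimes> g0 \<otimes> inv g} = generate G {h [^] (ord h div ord g0)}"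
    using cyclic_subgroup_eq_generate_pow[OF h fin] gens(2) ord_conj[OF g g0]
    unfolding H'_cyclic by simp
  also have "\<dots> = generate G {g0}"
    using cyclic_subgroup_eq_generate_pow[OF h fin] gens(1) unfolding H'_cyclic by simp
  finally have normalizes: "g \<in> normalizer G (generate G {g0})"
    by (rule normalizer_if_conj_generate_eq[OF g g0])
  have "generate G {g0} \<subseteq> H'" using gens(1) by (intro generate_subgroup_incl[OF _ H']) simp
  then have "finite (generate G {g0})" using fin_pair unfolding H'_def by (rule finite_subset)
  moreover have "elementary act (generate G {g})"
    using lox unfolding loxodromic_def by (rule lineal_imp_elementary)
  ultimately show ?thesis using elementary_generate_normalizing[OF g g0 _ _ normalizes] by blast
qed

lemma elementary_pair_if_infinite_subgroup:
  assumes no_parabolic: "\<forall>H. subgroup H G \<longrightarrow> \<not> parabolic act H"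
    and elliptic_cyclic: "\<forall>H. subgroup H G \<and> elliptic act H \<longrightarrow> finite H \<and> (\<exists>h\<in>H. H = generate G {h})"
    and g0: "g0 \<in> carrier G" and g: "g \<in> carrier G"
    and H': "subgroup H' G" and "infinite H'" and "g0 \<in> H'" and "H' \<subseteq> H" and "elementary act H"
    and conj: "\<forall>h\<in>H'. g \<otimes> h \<otimes> inv g \<in> H"
  shows "elementary act (generate G {g0, g})"
proof -
  have "\<not> elliptic act H'" using elliptic_cyclic H' \<open>infinite H'\<close> by blast
  moreover have "\<not> parabolic act H'" using no_parabolic H' by blast
  ultimately have "\<exists>a b. a \<noteq> b \<and> limit_set act H' = {a, b} \<and> limit_set act H = {a, b}"
    using limit_set_eq_pair_of_subset_elementary[OF \<open>H' \<subseteq> H\<close> \<open>elementary act H\<close>] by blast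
  then obtain a b where "a \<noteq> b" and LH': "limit_set act H' = {a, b}"
    and LH: "limit_set act H = {a, b}"
    by (elim exE conjE)
  have "limit_set act H' \<subseteq> gromov_boundary" unfolding limit_set_def by blast
  then have ab: "a \<in> gromov_boundary" "b \<in> gromov_boundary" unfolding LH' by blast+
  have "\<forall>h\<in>H'. g0 \<otimes> h \<otimes> inv g0 \<in> H'"
    using H' \<open>g0 \<in> H'\<close> by (blast intro: subgroup.m_closed subgroup.m_inv_closed)
  then have "boundary_map (act g0) \<xi> \<in> limit_set act H'" if "\<xi> \<in> limit_set act H'" for \<xi>
    using boundary_map_limit_set_conj[OF g0 subgroup.subset[OF H']] that by blast
  then have "boundary_map (act g0) ` {a, b} \<subseteq> {a, b}"
    unfolding image_subset_iff LH' by blast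
  moreover have "boundary_map (act g) \<xi> \<in> limit_set act H" if "\<xi> \<in> limit_set act H'" for \<xi>
    using boundary_map_limit_set_conj[OF g subgroup.subset[OF H'] conj that] .
  then have "boundary_map (act g) ` {a, b} \<subseteq> {a, b}"
    unfolding image_subset_iff LH' LH by blast
  ultimately show ?thesis
    using g0 g by (intro elementary_generate_preserving_pair[OF ab \<open>a \<noteq> b\<close>]) auto
qed

lemma elementary_of_elementary_conjugates:
  assumes no_parabolic: "\<forall>H. subgroup H G \<longrightarrow> \<not> parabolic act H"
    and elliptic_cyclic: "\<forall>H. subgroup H G \<and> elliptic act H \<longrightarrow> finite H \<and> (\<exists>h\<in>H. H = generate G {h})"
    and g0: "g0 \<in> carrier G" and g: "g \<in> carrier G" and lox: "loxodromic G act g"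
    and elem: "elementary act (generate G {g0, g \<otimes> g0 \<otimes> inv g, g \<otimes> (g \<otimes> g0 \<otimes> inv g) \<otimes> inv g})"
  shows "elementary act (generate G {g0, g})"
proof -
  define g1 where "g1 = g \<otimes> g0 \<otimes> inv g"
  define H where "H = generate G {g0, g1, g \<otimes> g1 \<otimes> inv g}"
  define H' where "H' = generate G {g0, g1}"
  have g1: "g1 \<in> carrier G" unfolding g1_def using g g0 by simp
  have H: "subgroup H G" and H': "subgroup H' G"
    unfolding H_def H'_def using g g0 g1 by (auto intro!: generate_is_subgroup)
  have gens: "g0 \<in> H'" "g1 \<in> H'" "g0 \<in> H" "g1 \<in> H" "g \<otimes> g1 \<otimes> inv g \<in> H"
    unfolding H_def H'_def by (auto intro: generate.incl)
  have "H' \<subseteq> H" unfolding H'_def using gens H by (intro generate_subgroup_incl) auto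
  have "(\<lambda>x. g \<otimes> x \<otimes> inv g) ` H' = generate G {g1, g \<otimes> g1 \<otimes> inv g}"
    unfolding H'_def g1_def using conj_generate[OF g, of "{g0, g1}"] g0 g1 g1_def by simp
  also have "\<dots> \<subseteq> H" using gens H by (intro generate_subgroup_incl) auto
  finally have conj: "\<forall>h\<in>H'. g \<otimes> h \<otimes> inv g \<in> H" by blast
  show ?thesis
  proof (cases "finite H'")
    case True
    then show ?thesis unfolding H'_def g1_def
      by (rule elementary_pair_if_finite_conj_pair[OF elliptic_cyclic g0 g lox])
  next
    case False
    moreover have "elementary act H" using elem unfolding H_def g1_def .
    ultimately show ?thesis
      using elementary_pair_if_infinite_subgroup[OF no_parabolic elliptic_cyclic g0 g H'] gens(1)
        \<open>H' \<subseteq> H\<close> conj by blast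
  qed
qed

lemma nu_property_two:
  assumes "\<forall>H. subgroup H G \<longrightarrow> \<not> parabolic act H"
    and "\<forall>H. subgroup H G \<and> elliptic act H \<longrightarrow> finite H \<and> (\<exists>h\<in>H. H = generate G {h})"
  shows "nu_property G act 2"
  unfolding nu_property_def
proof (intro ballI impI)
  fix g0 g assume g0: "g0 \<in> carrier G" and g: "g \<in> carrier G" and "loxodromic G act g"
    and "elementary act (generate G ((\<lambda>i. g [^] i \<otimes> g0 \<otimes> inv (g [^] i)) ` {0..2::nat}))"
  moreover have "(\<lambda>i. g [^] i \<otimes> g0 \<otimes> inv (g [^] i)) ` {0..2::nat}
      = {g0, g \<otimes> g0 \<otimes> inv g, g \<otimes> (g \<otimes> g0 \<otimes> inv g) \<otimes> inv g}"
    using g g0 by (simp add: atLeast0_atMost_Suc numeral_2_eq_2 m_assoc inv_mult_group insert_commute)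
  ultimately show "elementary act (generate G {g0, g})"
    using elementary_of_elementary_conjugates[OF assms] by simp
qed

end

theorem lemma3p8:
  fixes G :: "('g, 'b) monoid_scheme"
    and act :: "'g \<Rightarrow> 'x::metric_space \<Rightarrow> 'x"
    and \<delta> :: real
  assumes "group G"
    and "length_space TYPE('x)"
    and "delta_hyperbolic TYPE('x) \<delta>"
    and "isometric_action G act"
    and "\<forall>H. subgroup H G \<longrightarrow> \<not> parabolic act H"
    and "\<forall>H. subgroup H G \<and> elliptic act H \<longrightarrow> finite H \<and> (\<exists>h\<in>H. H = generate G {h})"
  shows "nu_invariant G act \<le> 2"
proof -
  interpret hyperbolic_group_action G act \<delta>
    using assms(1,3,4) by (simp add: hyperbolic_group_action_def hyperbolic_group_action_axioms_def
        isometric_group_action_def isometric_group_action_axioms_def)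
  have "nu_property G act 2" using assms(5,6) by (rule nu_property_two)
  then have "enat 2 \<in> enat ` {m. nu_property G act m}" by simp
  then show ?thesis unfolding nu_invariant_def numeral_eq_enat by (rule Inf_lower)
qed

end
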